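(* Let $L$ be a primitive $\mathbb{Z}_2$-lattice of rank at least $4$. If $L$ is of type A, then $B(\mathbf x,\mathbf y)\in 2^{\nu_2(L)-2}\mathbb{Z}_2$ for all $\mathbf x,\mathbf y\in L$ with $\mathrm{ord}_2(Q(\mathbf x))=\mathrm{ord}_2(Q(\mathbf y))=\nu_2(L)$.
   Context: A $\mathbb{Z}_2$-lattice is a free $\mathbb{Z}_2$-module of finite rank with a non-degenerate symmetric bilinear form $B$ with values in $\mathbb{Z}_2$; $Q(\mathbf x)=B(\mathbf x,\mathbf x)$. Scale $\mathfrak sL$ = ideal generated by all $B(\mathbf x,\mathbf y)$; norm $\mathfrak nL$ = ideal generated by all $Q(\mathbf x)$; primitive means $\mathfrak sL=\mathbb{Z}_2$. Let $SC_2=\{1,3,5,7,2,6,10,14\}$. For $L$ of rank $\ge4$ and $s\in SC_2$, let $u\ge0$ be least with $s4^u=Q(\mathbf x)$ for some $\mathbf x\in L$; $\nu_{2,s}(L)=\mathrm{ord}_2(s4^u)$; $\nu_2(L)=\max_s\nu_{2,s}(L)$. A primitive $\mathbb{Z}_2$-lattice $L$ of rank $\ge4$ is of type A if there is a Jordan decomposition $L=\ell_1\perp\cdots\perp\ell_k$ with $\mathbb{Z}_2=\mathfrak s(\ell_1)\supsetneq\cdots\supsetneq\mathfrak s(\ell_k)$ and a positive integer $t$ such that $\ell_1\perp\cdots\perp\ell_{t-1}$ is an anisotropic ternary $\mathbb{Z}_2$-lattice and $\mathfrak n\ell_t\subseteq 8\,\mathfrak s\ell_{t-1}$. *)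

theory Defs
  imports "Jordan_Normal_Form.Determinant" "HOL-Library.Extended_Nat"
begin

text \<open>A 2-adic integer is a compatible sequence of residues: the k-th entry is
  its residue modulo 2^k, taken in the range 0..2^k-1.\<close>

typedef z2 = "{f :: nat \<Rightarrow> int. \<forall>k. f k = f (Suc k) mod 2 ^ k}"
  morphisms digits Abs_z2
  by (rule exI[of _ "\<lambda>_. 0"]) simp

setup_lifting type_definition_z2

lemma z2_mod_step: "(x::int) mod 2 ^ Suc k mod 2 ^ k = x mod 2 ^ k"
proof -
  have "(2::int) ^ k dvd 2 ^ Suc k" by (simp add: le_imp_power_dvd)
  then show ?thesis by (rule mod_mod_cancel)
qed

lemma compat_plus:
  fixes f g :: "nat \<Rightarrow> int"
  assumes "\<forall>k. f k = f (Suc k) mod 2 ^ k" "\<forall>k. g k = g (Suc k) mod 2 ^ k"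
  shows "(f k + g k) mod 2 ^ k = (f (Suc k) + g (Suc k)) mod 2 ^ Suc k mod 2 ^ k"
  unfolding z2_mod_step using assms by (metis mod_add_eq)
lemma compat_times:
  fixes f g :: "nat \<Rightarrow> int"
  assumes "\<forall>k. f k = f (Suc k) mod 2 ^ k" "\<forall>k. g k = g (Suc k) mod 2 ^ k"
  shows "(f k * g k) mod 2 ^ k = (f (Suc k) * g (Suc k)) mod 2 ^ Suc k mod 2 ^ k"
  unfolding z2_mod_step using assms by (metis mod_mult_eq)
lemma compat_uminus:
  fixes f :: "nat \<Rightarrow> int"
  assumes "\<forall>k. f k = f (Suc k) mod 2 ^ k"
  shows "(- f k) mod 2 ^ k = (- f (Suc k)) mod 2 ^ Suc k mod 2 ^ k"
  unfolding z2_mod_step using assms by (metis mod_minus_eq)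

instantiation z2 :: comm_ring_1
begin

lift_definition zero_z2 :: z2 is "\<lambda>_. 0" by simp
lift_definition one_z2 :: z2 is "\<lambda>k. 1 mod 2 ^ k"
  by (metis z2_mod_step)
lift_definition plus_z2 :: "z2 \<Rightarrow> z2 \<Rightarrow> z2" is "\<lambda>f g k. (f k + g k) mod 2 ^ k"
  by (rule compat_plus) blast+
lift_definition times_z2 :: "z2 \<Rightarrow> z2 \<Rightarrow> z2" is "\<lambda>f g k. (f k * g k) mod 2 ^ k"
  by (rule compat_times) blast+
lift_definition uminus_z2 :: "z2 \<Rightarrow> z2" is "\<lambda>f k. (- f k) mod 2 ^ k"
  by (rule compat_uminus) blast
definition minus_z2 :: "z2 \<Rightarrow> z2 \<Rightarrow> z2" where "minus_z2 a b = a + - b"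

lemma digits_mod: "digits a k mod 2 ^ k = digits a k"
proof -
  have "digits a k = digits a (Suc k) mod 2 ^ k" using digits[of a] by blast
  then show ?thesis by (metis mod_mod_trivial)
qed

lemma digits_0: "digits a 0 = 0"
  using digits_mod[of a 0] by simp

lemma z2_eqI: "(\<And>k. digits a k = digits b k) \<Longrightarrow> a = b"
  by (simp add: digits_inject[symmetric] fun_eq_iff)

lemma z2_add_assoc: "(a::z2) + b + c = a + (b + c)"
  by (rule z2_eqI) (simp add: plus_z2.rep_eq mod_add_left_eq mod_add_right_eq add.assoc)
lemma z2_add_comm: "(a::z2) + b = b + a"
  by (rule z2_eqI) (simp add: plus_z2.rep_eq add.commute)
lemma z2_add_0: "0 + (a::z2) = a"
  by (rule z2_eqI) (simp add: plus_z2.rep_eq zero_z2.rep_eq digits_mod)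
lemma z2_neg: "- (a::z2) + a = 0"
  by (rule z2_eqI) (simp add: plus_z2.rep_eq zero_z2.rep_eq uminus_z2.rep_eq mod_add_left_eq)
lemma z2_mult_assoc: "(a::z2) * b * c = a * (b * c)"
  by (rule z2_eqI) (simp add: times_z2.rep_eq mod_mult_left_eq mod_mult_right_eq mult.assoc)
lemma z2_mult_comm: "(a::z2) * b = b * a"
  by (rule z2_eqI) (simp add: times_z2.rep_eq mult.commute)
lemma z2_mult_1: "1 * (a::z2) = a"
  by (rule z2_eqI) (simp add: times_z2.rep_eq one_z2.rep_eq mod_mult_left_eq digits_mod digits_0)
lemma z2_distrib: "((a::z2) + b) * c = a * c + b * c"
proof (rule z2_eqI)
  fix k
  have "((digits a k + digits b k) mod 2 ^ k * digits c k) mod 2 ^ k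
      = (digits a k * digits c k + digits b k * digits c k) mod 2 ^ k"
    by (simp add: mod_mult_left_eq distrib_right)
  also have "\<dots> = ((digits a k * digits c k) mod 2 ^ k + (digits b k * digits c k) mod 2 ^ k) mod 2 ^ k"
    by (rule mod_add_eq[symmetric])
  finally show "digits ((a + b) * c) k = digits (a * c + b * c) k"
    unfolding times_z2.rep_eq plus_z2.rep_eq .
qed
lemma z2_01: "(0::z2) \<noteq> 1"
proof
  assume "(0::z2) = 1"
  then have "digits (0::z2) 1 = digits 1 1" by simp
  then show False by (simp add: zero_z2.rep_eq one_z2.rep_eq)
qed

instance
proof
  fix a b c :: z2
  show "a + b + c = a + (b + c)" by (rule z2_add_assoc)
  show "a + b = b + a" by (rule z2_add_comm)
  show "0 + a = a" by (rule z2_add_0)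
  show "- a + a = 0" by (rule z2_neg)
  show "a - b = a + - b" by (simp add: minus_z2_def)
  show "a * b * c = a * (b * c)" by (rule z2_mult_assoc)
  show "a * b = b * a" by (rule z2_mult_comm)
  show "1 * a = a" by (rule z2_mult_1)
  show "(a + b) * c = a * c + b * c" by (rule z2_distrib)
  show "(0::z2) \<noteq> 1" by (rule z2_01)
qed

end

definition ord2 :: "z2 \<Rightarrow> enat" where
  "ord2 a = (if a = 0 then \<infinity> else enat (LEAST k. \<not> (2::z2) ^ Suc k dvd a))"

definition ideal_gen :: "z2 set \<Rightarrow> z2 set" where
  "ideal_gen S = {a. \<exists>xs :: (z2 \<times> z2) list. set (map snd xs) \<subseteq> S \<and>
                       a = sum_list (map (\<lambda>(r, s). r * s) xs)}"

text \<open>A Z_2-lattice of rank n is Z_2^n (vectors in carrier_vec n) with the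
  bilinear form given by a symmetric Gram matrix G with nonzero determinant.\<close>
definition is_Z2_lattice :: "z2 mat \<Rightarrow> nat \<Rightarrow> bool" where
  "is_Z2_lattice G n \<longleftrightarrow> G \<in> carrier_mat n n \<and> transpose_mat G = G \<and> det G \<noteq> 0"

definition bform :: "z2 mat \<Rightarrow> z2 vec \<Rightarrow> z2 vec \<Rightarrow> z2" where
  "bform G x y = x \<bullet> (G *\<^sub>v y)"

definition qform :: "z2 mat \<Rightarrow> z2 vec \<Rightarrow> z2" where
  "qform G x = bform G x x"

definition scale_of :: "z2 mat \<Rightarrow> z2 vec set \<Rightarrow> z2 set" where
  "scale_of G M = ideal_gen {bform G x y | x y. x \<in> M \<and> y \<in> M}"

definition norm_of :: "z2 mat \<Rightarrow> z2 vec set \<Rightarrow> z2 set" where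
  "norm_of G M = ideal_gen {qform G x | x. x \<in> M}"

definition primitive :: "z2 mat \<Rightarrow> nat \<Rightarrow> bool" where
  "primitive G n \<longleftrightarrow> scale_of G (carrier_vec n) = UNIV"

definition SC2 :: "nat set" where "SC2 = {1, 3, 5, 7, 2, 6, 10, 14}"

definition least_u :: "z2 mat \<Rightarrow> nat \<Rightarrow> nat \<Rightarrow> nat" where
  "least_u G n s = (LEAST u. \<exists>x \<in> carrier_vec n. qform G x = of_nat s * 4 ^ u)"

definition nu2s :: "z2 mat \<Rightarrow> nat \<Rightarrow> nat \<Rightarrow> nat" where
  "nu2s G n s = the_enat (ord2 (of_nat s * 4 ^ least_u G n s))"

definition nu2 :: "z2 mat \<Rightarrow> nat \<Rightarrow> nat" where
  "nu2 G n = Max (nu2s G n ` SC2)"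

text \<open>A Jordan decomposition is encoded by a basis of L (the columns of an
  invertible matrix P over Z_2) together with block boundaries
  bs = [b_0 = 0 < b_1 < ... < b_k = n]; the j-th component (j = 1..k) is the
  Z_2-span of the basis vectors with indices in {b_(j-1)..<b_j}.\<close>

definition span_cols :: "z2 mat \<Rightarrow> nat \<Rightarrow> nat set \<Rightarrow> z2 vec set" where
  "span_cols P n A = {P *\<^sub>v v | v. v \<in> carrier_vec n \<and> (\<forall>i<n. i \<notin> A \<longrightarrow> v $ i = 0)}"

definition blk :: "nat list \<Rightarrow> nat \<Rightarrow> nat set" where
  "blk bs j = {bs ! (j - 1) ..< bs ! j}"

definition comp :: "z2 mat \<Rightarrow> nat \<Rightarrow> nat list \<Rightarrow> nat \<Rightarrow> z2 vec set" where
  "comp P n bs j = span_cols P n (blk bs j)"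

definition blk_gram :: "z2 mat \<Rightarrow> z2 mat \<Rightarrow> nat list \<Rightarrow> nat \<Rightarrow> z2 mat" where
  "blk_gram G P bs j = mat (bs ! j - bs ! (j - 1)) (bs ! j - bs ! (j - 1))
      (\<lambda>(p, q). bform G (col P (bs ! (j - 1) + p)) (col P (bs ! (j - 1) + q)))"

definition modular_blk :: "z2 mat \<Rightarrow> z2 mat \<Rightarrow> nat list \<Rightarrow> nat \<Rightarrow> bool" where
  "modular_blk G P bs j \<longleftrightarrow> (\<exists>(a::nat) U. U \<in> carrier_mat (bs ! j - bs ! (j - 1)) (bs ! j - bs ! (j - 1))
      \<and> det U dvd 1 \<and> blk_gram G P bs j = (2 ^ a) \<cdot>\<^sub>m U)"

definition jordan_decomp :: "z2 mat \<Rightarrow> nat \<Rightarrow> z2 mat \<Rightarrow> nat list \<Rightarrow> bool" where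
  "jordan_decomp G n P bs \<longleftrightarrow>
     P \<in> carrier_mat n n \<and> invertible_mat P \<and>
     length bs \<ge> 2 \<and> bs ! 0 = 0 \<and> last bs = n \<and>
     (\<forall>j. j + 1 < length bs \<longrightarrow> bs ! j < bs ! (Suc j)) \<and>
     (\<forall>i j p q. 1 \<le> i \<and> i < length bs \<and> 1 \<le> j \<and> j < length bs \<and> i \<noteq> j \<and>
        p \<in> blk bs i \<and> q \<in> blk bs j \<longrightarrow> bform G (col P p) (col P q) = 0) \<and>
     (\<forall>j. 1 \<le> j \<and> j < length bs \<longrightarrow> modular_blk G P bs j) \<and>
     scale_of G (comp P n bs 1) = UNIV \<and>
     (\<forall>j. 1 \<le> j \<and> j + 1 < length bs \<longrightarrow>
        scale_of G (comp P n bs (Suc j)) \<subset> scale_of G (comp P n bs j))"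

definition anisotropic :: "z2 mat \<Rightarrow> nat \<Rightarrow> z2 vec set \<Rightarrow> bool" where
  "anisotropic G n M \<longleftrightarrow> (\<forall>x \<in> M. qform G x = 0 \<longrightarrow> x = 0\<^sub>v n)"

text \<open>Type A (the number of components is k = length bs - 1; t ranges over 1..k).\<close>
definition type_A :: "z2 mat \<Rightarrow> nat \<Rightarrow> bool" where
  "type_A G n \<longleftrightarrow> primitive G n \<and> n \<ge> 4 \<and>
     (\<exists>P bs t. jordan_decomp G n P bs \<and> 1 \<le> t \<and> t < length bs \<and>
        bs ! (t - 1) = 3 \<and>
        anisotropic G n (span_cols P n {0 ..< bs ! (t - 1)}) \<and>
        norm_of G (comp P n bs t) \<subseteq> (\<lambda>c. 8 * c) ` scale_of G (comp P n bs (t - 1)))"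

end

theory Submission
  imports Defs
begin

text \<open>If \<open>ord\<^sub>2 B(x,y) = j\<close> while \<open>2\<^sup>j\<^sup>+\<^sup>3\<close> divides \<open>Q(x)\<close> and \<open>Q(y)\<close>, then
  \<open>Q(x + b y) = Q(x) + 2 b B(x,y) + b\<^sup>2 Q(y)\<close> is a quadratic in \<open>b\<close> whose linear
  coefficient has order exactly \<open>j + 1\<close> and dominates the others, so by Hensel's lemma it
  takes every value in \<open>2\<^sup>j\<^sup>+\<^sup>1 \<int>\<^sub>2\<close>. Hence every \<open>s 4\<^sup>u\<close> of order \<open>\<ge> j + 1\<close> is represented
  and \<open>\<nu>\<^sub>2(L) \<le> j + 2\<close>. So vectors of norm order \<open>\<nu>\<^sub>2(L)\<close> pair into \<open>2\<^sup>\<nu>\<^sup>-\<^sup>2 \<int>\<^sub>2\<close>.\<close>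

lemma digits_add: "digits (a + b) k = (digits a k + digits b k) mod 2 ^ k"
  by (simp add: plus_z2.rep_eq)

lemma digits_mult: "digits (a * b) k = (digits a k * digits b k) mod 2 ^ k"
  by (simp add: times_z2.rep_eq)

lemma digits_of_nat: "digits (of_nat m :: z2) k = int m mod 2 ^ k"
proof (induction m)
  case 0
  then show ?case by (simp add: zero_z2.rep_eq)
next
  case (Suc m)
  have "digits (of_nat (Suc m) :: z2) k = (1 mod 2 ^ k + int m mod 2 ^ k) mod 2 ^ k"
    by (simp add: digits_add Suc one_z2.rep_eq)
  also have "\<dots> = int (Suc m) mod 2 ^ k"
    by (cases "k = 0") (simp_all add: mod_add_right_eq)
  finally show ?case .
qed

lemma digits_eq_0_if_pow_dvd: "(2::z2) ^ k dvd a \<Longrightarrow> digits a k = 0"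
proof -
  assume "(2::z2) ^ k dvd a"
  then obtain c where "a = of_nat (2 ^ k) * c" by (auto elim: dvdE)
  then show ?thesis by (simp only: digits_mult digits_of_nat) simp
qed

lemma digits_step: "digits a k = digits a (Suc k) mod 2 ^ k"
  using digits[of a] by blast

lemma z2_exists_digits:
  assumes "\<And>k. f k = f (Suc k) mod 2 ^ k"
  shows "\<exists>c. digits c = f"
  using assms Abs_z2_inverse[of f] by blast

lemma z2_limit:
  assumes "\<And>k. digits (b (Suc k)) k = digits (b k) k"
  shows "\<exists>\<beta>. \<forall>k. digits \<beta> k = digits (b k) k"
proof -
  have "digits (b k) k = digits (b (Suc k)) (Suc k) mod 2 ^ k" for k
    using digits_step[of "b (Suc k)" k] assms[of k] by simp
  then show ?thesis using z2_exists_digits[of "\<lambda>k. digits (b k) k"] by metis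
qed

lemma two_dvd_if_digits_1_eq_0:
  assumes "digits a 1 = 0"
  shows "(2::z2) dvd a"
proof -
  have even: "even (digits a (Suc k))" for k
  proof -
    have "digits a (Suc k) mod 2 = digits a 1"
    proof (induction k)
      case 0
      then show ?case using digits_mod[of a 1] by simp
    next
      case (Suc k)
      have "digits a (Suc k) mod 2 = digits a (Suc (Suc k)) mod 2"
        unfolding digits_step[of a "Suc k"] by (rule mod_mod_cancel) simp
      then show ?case using Suc.IH by linarith
    qed
    then show ?thesis using assms by (simp add: even_iff_mod_2_eq_zero)
  qed
  have "digits a (Suc k) div 2 = digits a (Suc (Suc k)) div 2 mod 2 ^ k" for k
    using div_exp_mod_exp_eq[of "digits a (Suc (Suc k))" 1 k]
    by (simp add: digits_step[of a "Suc k"] del: digits_mod)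
  then obtain c where c: "digits c = (\<lambda>k. digits a (Suc k) div 2)"
    using z2_exists_digits by meson
  have "a = 2 * c"
  proof (rule z2_eqI)
    fix k
    have "digits (2 * c) k = 2 * (digits a (Suc k) div 2) mod 2 ^ k"
      using digits_mult[of 2 c k] digits_of_nat[of 2 k] c by (simp add: mod_mult_left_eq)
    also have "\<dots> = digits a k"
      using even[of k] digits_step[of a k] by simp
    finally show "digits a k = digits (2 * c) k" by simp
  qed
  then show ?thesis by simp
qed

lemma two_dvd_one_plus:
  assumes "\<not> (2::z2) dvd g"
  shows "(2::z2) dvd 1 + g"
proof -
  have "digits g 1 = digits g 1 mod 2" using digits_mod[of g 1] by simp
  then have "digits g 1 = 1"
    using two_dvd_if_digits_1_eq_0[of g] assms by (metis mod2_eq_if)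
  then have "digits (1 + g) 1 = 0" by (simp add: digits_add one_z2.rep_eq)
  then show ?thesis by (rule two_dvd_if_digits_1_eq_0)
qed

text \<open>Hensel: the root is the limit of the corrections \<open>b\<^sub>k\<^sub>+\<^sub>1 = b\<^sub>k + F(b\<^sub>k)\<close>; since \<open>1 + g\<close>
  is even, each step gains a factor 2 in \<open>F(b\<^sub>k)\<close>.\<close>

lemma quadratic_odd_linear_coeff_has_root:
  fixes g h e :: z2
  assumes "\<not> 2 dvd g"
  shows "\<exists>b. g * b + 2 * h * b\<^sup>2 + e = 0"
proof -
  obtain w where w: "1 + g = 2 * w" using two_dvd_one_plus[OF assms] by (auto elim: dvdE)
  define F where "F = (\<lambda>b::z2. g * b + 2 * h * b\<^sup>2 + e)"
  define bs where "bs = rec_nat (0::z2) (\<lambda>k b. b + F b)"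
  have bs_Suc: "bs (Suc k) = bs k + F (bs k)" for k by (simp add: bs_def)
  have F_pow_dvd: "(2::z2) ^ k dvd F (bs k)" for k
  proof (induction k)
    case 0
    then show ?case by simp
  next
    case (Suc k)
    then obtain \<rho> where \<rho>: "F (bs k) = 2 ^ k * \<rho>" by (auto elim: dvdE)
    have "F (bs (Suc k)) = F (bs k) * (1 + g) + 4 * h * bs k * F (bs k) + 2 * h * (F (bs k))\<^sup>2"
      by (simp add: bs_Suc F_def algebra_simps power2_eq_square)
    also have "\<dots> = 2 ^ Suc k * (\<rho> * w + 2 * h * bs k * \<rho> + 2 ^ k * h * \<rho>\<^sup>2)"
      unfolding \<rho> w by (simp add: algebra_simps power2_eq_square power_mult_distrib)
    finally show ?case by simp
  qed
  have "digits (bs (Suc k)) k = digits (bs k) k" for k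
    using digits_eq_0_if_pow_dvd[OF F_pow_dvd[of k]] by (simp add: bs_Suc digits_add digits_mod)
  then obtain \<beta> where \<beta>: "\<And>k. digits \<beta> k = digits (bs k) k" using z2_limit by meson
  have "F \<beta> = 0"
  proof (rule z2_eqI)
    fix k
    have "digits (F \<beta>) k = digits (F (bs k)) k"
      by (simp add: F_def digits_add digits_mult power2_eq_square \<beta>)
    then show "digits (F \<beta>) k = digits 0 k"
      using digits_eq_0_if_pow_dvd[OF F_pow_dvd[of k]] by (simp add: zero_z2.rep_eq)
  qed
  then show ?thesis unfolding F_def by blast
qed

lemma ord2_enat:
  "ord2 a = enat m \<Longrightarrow> a \<noteq> 0 \<and> m = (LEAST k. \<not> (2::z2) ^ Suc k dvd a)"
  by (auto simp: ord2_def split: if_splits)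

lemma pow_ord2_dvd:
  assumes "ord2 a = enat m"
  shows "(2::z2) ^ m dvd a"
proof (cases m)
  case (Suc m')
  then have "m' < (LEAST k. \<not> (2::z2) ^ Suc k dvd a)" using ord2_enat[OF assms] by simp
  then show ?thesis using Suc not_less_Least by blast
qed simp

lemma ord2_enat_imp_odd_cofactor:
  assumes "ord2 a = enat m"
  shows "\<exists>g. a = (2::z2) ^ m * g \<and> \<not> 2 dvd g"
proof -
  have a: "a \<noteq> 0" and m: "m = (LEAST k. \<not> (2::z2) ^ Suc k dvd a)"
    using ord2_enat[OF assms] by auto
  obtain k where k: "digits a k \<noteq> 0" using a z2_eqI[of a 0] by (auto simp: zero_z2.rep_eq)
  then obtain k' where "k = Suc k'" using digits_0 by (cases k) auto
  then have "\<not> (2::z2) ^ Suc k' dvd a" using k digits_eq_0_if_pow_dvd by blast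
  then have not_dvd: "\<not> (2::z2) ^ Suc m dvd a" unfolding m by (rule LeastI)
  obtain g where g: "a = 2 ^ m * g" using pow_ord2_dvd[OF assms] by (auto elim: dvdE)
  have "\<not> 2 dvd g"
  proof
    assume "2 dvd g"
    then obtain g' where "g = 2 * g'" by (auto elim: dvdE)
    then have "a = 2 ^ Suc m * g'" using g by simp
    then show False using not_dvd by simp
  qed
  then show ?thesis using g by blast
qed

lemma ord2_le_if_not_pow_dvd:
  assumes "\<not> (2::z2) ^ Suc m dvd a"
  shows "the_enat (ord2 a) \<le> m"
  using assms Least_le[of "\<lambda>k. \<not> (2::z2) ^ Suc k dvd a" m]
  by (auto simp: ord2_def)

lemma ord2_of_nat_pow2_times_odd:
  assumes "odd s"
  shows "the_enat (ord2 (of_nat (2 ^ M * s) :: z2)) \<le> M"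
proof (rule ord2_le_if_not_pow_dvd, rule notI)
  assume "(2::z2) ^ Suc M dvd of_nat (2 ^ M * s)"
  then have "int (2 ^ M * s) mod 2 ^ Suc M = 0"
    using digits_eq_0_if_pow_dvd digits_of_nat by metis
  moreover have "int (2 ^ M * s) mod 2 ^ Suc M = 2 ^ M * (int s mod 2)"
    using mod_mult_mult1[of "2 ^ M" "int s" 2] by (simp add: mult.commute)
  ultimately have "int s mod 2 = 0" by simp
  then show False using assms by presburger
qed

lemma bform_commute:
  assumes "G \<in> carrier_mat n n" "transpose_mat G = G" "x \<in> carrier_vec n" "y \<in> carrier_vec n"
  shows "bform G y x = bform G x y"
proof -
  have "y \<bullet> (G *\<^sub>v x) = (transpose_mat G *\<^sub>v y) \<bullet> x"
    using transpose_vec_mult_scalar[of G n n x y] assms by simp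
  also have "\<dots> = x \<bullet> (G *\<^sub>v y)" using assms comm_scalar_prod[of "G *\<^sub>v y" n x] by simp
  finally show ?thesis by (simp add: bform_def)
qed

lemma qform_add_smult:
  assumes G: "G \<in> carrier_mat n n" "transpose_mat G = G"
    and x: "x \<in> carrier_vec n" and y: "y \<in> carrier_vec n"
  shows "qform G (x + b \<cdot>\<^sub>v y) = qform G x + 2 * b * bform G x y + b\<^sup>2 * qform G y"
proof -
  have "G *\<^sub>v (b \<cdot>\<^sub>v y) = b \<cdot>\<^sub>v (G *\<^sub>v y)"
    using G y by (intro eq_vecI) (auto simp: scalar_prod_smult_distrib[of _ n])
  then have "G *\<^sub>v (x + b \<cdot>\<^sub>v y) = G *\<^sub>v x + b \<cdot>\<^sub>v (G *\<^sub>v y)"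
    using mult_add_distrib_mat_vec[OF G(1) x] y by simp
  then have "qform G (x + b \<cdot>\<^sub>v y)
      = x \<bullet> (G *\<^sub>v x) + b * (x \<bullet> (G *\<^sub>v y)) + b * (y \<bullet> (G *\<^sub>v x)) + b * b * (y \<bullet> (G *\<^sub>v y))"
    using G x y
    by (simp add: qform_def bform_def add_scalar_prod_distrib[of _ n]
        scalar_prod_add_distrib[of _ n] algebra_simps)
  then show ?thesis
    using bform_commute[OF G x y] by (simp add: qform_def bform_def algebra_simps power2_eq_square)
qed

lemma qform_represents_pow_multiples:
  assumes G: "is_Z2_lattice G n" and x: "x \<in> carrier_vec n" and y: "y \<in> carrier_vec n"
    and Qx: "(2::z2) ^ (j + 3) dvd qform G x" and Qy: "(2::z2) ^ (j + 3) dvd qform G y"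
    and B: "ord2 (bform G x y) = enat j"
    and c: "(2::z2) ^ (j + 1) dvd c"
  shows "\<exists>z\<in>carrier_vec n. qform G z = c"
proof -
  obtain g where g: "bform G x y = 2 ^ j * g" "\<not> 2 dvd g"
    using ord2_enat_imp_odd_cofactor[OF B] by blast
  obtain a where a: "qform G x = 2 ^ (j + 3) * a" using Qx by (rule dvdE)
  obtain d where d: "qform G y = 2 ^ (j + 3) * d" using Qy by (rule dvdE)
  obtain c' where c': "c = 2 ^ (j + 1) * c'" using c by (auto elim: dvdE)
  obtain b where b: "g * b + 2 * (2 * d) * b\<^sup>2 + (4 * a - c') = 0"
    using quadratic_odd_linear_coeff_has_root[OF g(2)] by blast
  have "qform G (x + b \<cdot>\<^sub>v y) = qform G x + 2 * b * bform G x y + b\<^sup>2 * qform G y"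
    using G x y qform_add_smult unfolding is_Z2_lattice_def by blast
  also have "\<dots> = 2 ^ (j + 1) * (g * b + 2 * (2 * d) * b\<^sup>2 + (4 * a - c')) + c"
    unfolding a d g(1) c' by (simp add: algebra_simps power_add)
  finally show ?thesis using b x y by (intro bexI[of _ "x + b \<cdot>\<^sub>v y"]) auto
qed

lemma SC2_pow2_times_odd: "s \<in> SC2 \<Longrightarrow> \<exists>e s'. s = 2 ^ e * s' \<and> odd s' \<and> e \<le> 1"
  unfolding SC2_def
  by (auto intro: exI[of _ 0] exI[of _ 1] exI[of "\<lambda>s'. _ = 2 * s' \<and> odd s'"])

lemma nu2s_le_if_represents_pow_multiples:
  assumes rep: "\<And>c. (2::z2) ^ J dvd c \<Longrightarrow> \<exists>z\<in>carrier_vec n. qform G z = c"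
    and s: "s \<in> SC2"
  shows "nu2s G n s \<le> J + 1"
proof -
  obtain e s' where s': "s = 2 ^ e * s'" "odd s'" "e \<le> 1" using SC2_pow2_times_odd[OF s] by blast
  have s4: "(of_nat s * 4 ^ u :: z2) = of_nat (2 ^ (e + 2 * u) * s')" for u
    using power_mult[of "2::z2" 2 u] by (simp add: s'(1) power_add mult_ac)
  define u where "u = (J + 1 - e) div 2"
  have "J \<le> e + 2 * u" "e + 2 * u \<le> J + 1" using s'(3) unfolding u_def by presburger+
  then have "(2::z2) ^ J dvd of_nat s * 4 ^ u"
    unfolding s4 by (simp add: le_imp_power_dvd)
  then have "least_u G n s \<le> u"
    unfolding least_u_def using rep by (intro Least_le) blast
  moreover have "nu2s G n s \<le> e + 2 * least_u G n s"
    unfolding nu2s_def s4 using ord2_of_nat_pow2_times_odd[OF s'(2)] by simp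
  ultimately show ?thesis using \<open>e + 2 * u \<le> J + 1\<close> by linarith
qed

lemma nu2_le_if_represents_pow_multiples:
  assumes "\<And>c. (2::z2) ^ J dvd c \<Longrightarrow> \<exists>z\<in>carrier_vec n. qform G z = c"
  shows "nu2 G n \<le> J + 1"
  unfolding nu2_def using nu2s_le_if_represents_pow_multiples[OF assms]
  by (subst Max_le_iff) (auto simp: SC2_def)

theorem lemma2p9:
  fixes G :: "z2 mat" and n :: nat and x y :: "z2 vec"
  assumes "is_Z2_lattice G n" and "n \<ge> 4" and "primitive G n"
    and "type_A G n"
    and "x \<in> carrier_vec n" and "y \<in> carrier_vec n"
    and "ord2 (qform G x) = enat (nu2 G n)" and "ord2 (qform G y) = enat (nu2 G n)"
  shows "bform G x y \<in> (\<lambda>c. 2 ^ (nu2 G n - 2) * c) ` (UNIV :: z2 set)"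
proof (cases "ord2 (bform G x y)")
  case (enat j)
  show ?thesis
  proof (cases "nu2 G n - 2 \<le> j")
    case True
    obtain g where "bform G x y = 2 ^ j * g" using pow_ord2_dvd[OF enat] by (rule dvdE)
    moreover have "(2::z2) ^ j = 2 ^ (nu2 G n - 2) * 2 ^ (j - (nu2 G n - 2))"
      using True by (simp flip: power_add)
    ultimately show ?thesis by (auto simp: mult.assoc)
  next
    case False
    then have "(2::z2) ^ (j + 3) dvd 2 ^ nu2 G n" by (simp add: le_imp_power_dvd)
    then have "(2::z2) ^ (j + 3) dvd qform G x" "(2::z2) ^ (j + 3) dvd qform G y"
      using pow_ord2_dvd[OF assms(7)] pow_ord2_dvd[OF assms(8)] by (auto intro: dvd_trans)
    then have "nu2 G n \<le> (j + 1) + 1"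
      by (intro nu2_le_if_represents_pow_multiples qform_represents_pow_multiples[OF assms(1,5,6) _ _ enat])
    then show ?thesis using False by simp
  qed
next
  case infinity
  then have "bform G x y = 2 ^ (nu2 G n - 2) * 0" by (simp add: ord2_def split: if_splits)
  then show ?thesis by blast
qed

end
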